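(* Let $\alpha\geqslant2$, $N_1,N_2\in2^{\mathbb{Z}}$ with $N_2\ll N_1$ and $N_1\gtrsim1$, $L_1,L_2\in2^{\mathbb{N}_0}$, and $D^*\in2^{\mathbb{N}}$. Let $f_{i,N_i,L_i}$, $i=1,2$, be functions on $\mathbb{R}\times\mathbb{R}\times\mathbb{Z}$ with $\mathrm{supp}(f_{i,N_i,L_i})\subseteq D_{N_i,L_i}$ and such that $|\frac{\eta_1}{\xi_1}-\frac{\eta_2}{\xi_2}|\lesssim D^*$ for all $(\xi_i,\eta_i)\in\pi_{\xi,\eta}(\mathrm{supp}f_{i,N_i,L_i})$. Then, with $L_{\min}=\min(L_1,L_2)$, $L_{\max}=\max(L_1,L_2)$, $$\|f_{1,N_1,L_1}*f_{2,N_2,L_2}\|_{L^2_{\tau,\xi,\eta}}\lesssim\log(D^* )\,N_2^{\frac12}L_{\min}^{\frac12}\langle L_{\max}/N_1^{\frac{\alpha}{2}}\rangle^{\frac12}\prod_{i=1}^2\|f_{i,N_i,L_i}\|_2.$$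
   Context: Functions are on $\mathbb{R}_\tau\times\mathbb{R}_\xi\times\mathbb{Z}_\eta$ with Lebesgue measure in $\tau,\xi$ and counting measure in $\eta$. $\omega_\alpha(\xi,\eta)=\xi|\xi|^\alpha+\frac{\eta^2}{\xi}$; $A_N=\{N/4\leqslant|\xi|\leqslant4N\}$; $D_{N,L}=\{(\tau,\xi,\eta):\xi\in A_N,\ |\tau-\omega_\alpha(\xi,\eta)|\leqslant L\}$; $\langle x\rangle=(1+x^2)^{1/2}$. *)

theory Defs
  imports "HOL-Analysis.Analysis"
begin

type_synonym pt = "real \<times> real \<times> int"

definition M3 :: "pt measure" where
  "M3 = lborel \<Otimes>\<^sub>M (lborel \<Otimes>\<^sub>M (count_space UNIV :: int measure))"

definition omega :: "real \<Rightarrow> real \<Rightarrow> int \<Rightarrow> real" where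
  "omega \<alpha> \<xi> \<eta> = \<xi> * \<bar>\<xi>\<bar> powr \<alpha> + (real_of_int \<eta>)\<^sup>2 / \<xi>"

definition A_set :: "real \<Rightarrow> real set" where
  "A_set N = {\<xi>. N / 4 \<le> \<bar>\<xi>\<bar> \<and> \<bar>\<xi>\<bar> \<le> 4 * N}"

definition D_set :: "real \<Rightarrow> real \<Rightarrow> real \<Rightarrow> pt set" where
  "D_set \<alpha> N L = {(\<tau>, \<xi>, \<eta>). \<xi> \<in> A_set N \<and> \<bar>\<tau> - omega \<alpha> \<xi> \<eta>\<bar> \<le> L}"

definition jb :: "real \<Rightarrow> real" where
  "jb x = sqrt (1 + x\<^sup>2)"

text \<open>Support = set where the function is nonzero (the sets D are closed, so
 this agrees with the closed support condition).\<close>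
definition supp3 :: "(pt \<Rightarrow> complex) \<Rightarrow> pt set" where
  "supp3 f = {x. f x \<noteq> 0}"

definition conv3 :: "(pt \<Rightarrow> complex) \<Rightarrow> (pt \<Rightarrow> complex) \<Rightarrow> pt \<Rightarrow> complex" where
  "conv3 f g = (\<lambda>(\<tau>, \<xi>, \<eta>). \<integral>y. (case y of (\<tau>1, \<xi>1, \<eta>1) \<Rightarrow>
       f (\<tau>1, \<xi>1, \<eta>1) * g (\<tau> - \<tau>1, \<xi> - \<xi>1, \<eta> - \<eta>1)) \<partial>M3)"

definition L2norm :: "(pt \<Rightarrow> complex) \<Rightarrow> real" where
  "L2norm f = sqrt (\<integral>x. (cmod (f x))\<^sup>2 \<partial>M3)"

definition in_L2 :: "(pt \<Rightarrow> complex) \<Rightarrow> bool" where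
  "in_L2 f \<longleftrightarrow> f \<in> borel_measurable M3 \<and> integrable M3 (\<lambda>x. (cmod (f x))\<^sup>2)"

definition dyadic_Z :: "real \<Rightarrow> bool" where
  "dyadic_Z N \<longleftrightarrow> (\<exists>k::int. N = 2 powr (real_of_int k))"

definition dyadic_N0 :: "real \<Rightarrow> bool" where
  "dyadic_N0 L \<longleftrightarrow> (\<exists>k::nat. L = 2 ^ k)"

definition dyadic_N :: "real \<Rightarrow> bool" where
  "dyadic_N D \<longleftrightarrow> (\<exists>k::nat. k \<ge> 1 \<and> D = 2 ^ k)"

end

theory Submission
  imports Defs
begin

text \<open>By Cauchy-Schwarz, \<open>\<parallel>f1 * f2\<parallel>\<^sup>2\<close> is at most \<open>\<parallel>f1\<parallel>\<^sup>2 \<parallel>f2\<parallel>\<^sup>2\<close> times the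
  supremum over \<open>x\<close> of the measure of \<open>D1 \<inter> (x - D2)\<close>. Integrating out \<open>\<tau>1\<close> costs
  \<open>2 min L1 L2\<close> and leaves the resonance condition
  \<open>\<bar>\<tau> - \<omega>(\<xi>1, \<eta>1) - \<omega>(\<xi> - \<xi>1, \<eta> - \<eta>1)\<bar> \<le> L1 + L2\<close>. For fixed \<open>\<xi>1\<close> this is a quadratic in
  \<open>\<eta>1\<close> with leading coefficient \<open>1/\<xi>1 + 1/(\<xi> - \<xi>1)\<close> of size at least \<open>1/(8 N2)\<close>, so it
  has at most \<open>2 + 4 (L1 + L2) sqrt (8 N2) / sqrt \<bar>c\<bar>\<close> integer solutions, where \<open>c = c(\<xi>1)\<close>
  is its value at the vertex. Because \<open>\<bar>\<xi> - \<xi>1\<bar>\<close> is small compared with \<open>\<bar>\<xi>1\<bar>\<close>, \<open>c\<close>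
  decreases in \<open>\<xi>1\<close> at rate at least \<open>(N1/4)\<^sup>\<alpha>\<close>, so the integral of \<open>\<bar>c\<bar>\<^sup>-\<^sup>1\<^sup>/\<^sup>2\<close> over
  the \<open>\<xi>1\<close>-range (of length \<open>O(N2)\<close>) is \<open>O(sqrt (N2 / N1\<^sup>\<alpha>))\<close>. Altogether the intersection
  has measure \<open>O(N2 L_min \<langle>L_max / N1\<^sup>\<alpha>\<^sup>/\<^sup>2\<rangle>)\<close>.\<close>

section \<open>The measure space and convolutions\<close>

lemma space_M3[simp]: "space M3 = UNIV"
  by (simp add: M3_def space_pair_measure)

lemma sigma_finite_measure_real_int:
  "sigma_finite_measure ((lborel :: real measure) \<Otimes>\<^sub>M count_space (UNIV :: int set))"
  by (intro sigma_finite_pair_measure lborel.sigma_finite_measure_axioms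
      sigma_finite_measure_count_space)

lemma sigma_finite_measure_M3: "sigma_finite_measure M3"
  unfolding M3_def
  by (intro sigma_finite_pair_measure lborel.sigma_finite_measure_axioms
      sigma_finite_measure_real_int)

lemma pair_sigma_finite_M3: "pair_sigma_finite M3 M3"
  by (intro pair_sigma_finite.intro sigma_finite_measure_M3)

lemma measurable_pt_diff_pair: "(\<lambda>p. fst p - snd p) \<in> M3 \<Otimes>\<^sub>M M3 \<rightarrow>\<^sub>M M3"
proof -
  have "(\<lambda>p::pt \<times> pt. fst p - snd p) = (\<lambda>p. (fst (fst p) - fst (snd p),
      fst (snd (fst p)) - fst (snd (snd p)), snd (snd (fst p)) - snd (snd (snd p))))"
    by (auto simp: fun_eq_iff prod_eq_iff)
  also have "\<dots> \<in> M3 \<Otimes>\<^sub>M M3 \<rightarrow>\<^sub>M M3"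
    unfolding M3_def by measurable
  finally show ?thesis .
qed

lemma measurable_pt_diff[measurable (raw)]:
  "f \<in> N \<rightarrow>\<^sub>M M3 \<Longrightarrow> g \<in> N \<rightarrow>\<^sub>M M3 \<Longrightarrow> (\<lambda>x. f x - g x) \<in> N \<rightarrow>\<^sub>M M3"
  using measurable_compose[OF measurable_Pair measurable_pt_diff_pair] by simp

lemma distr_M3_translate: "distr M3 M3 (\<lambda>x. x - y) = M3"
proof -
  obtain a b c where y: "y = (a, b, c)"
    by (cases y) auto
  have real: "distr lborel borel (\<lambda>x::real. x - d) = lborel" for d
  proof -
    have "(\<lambda>x::real. x - d) = (+) (- d)"
      by auto
    then show ?thesis
      by (simp add: lborel_distr_plus)
  qed
  have int: "distr (count_space UNIV) (count_space UNIV) (\<lambda>n::int. n - c) = count_space UNIV"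
    by (rule distr_bij_count_space) (rule bij_betwI[where g="\<lambda>n. n + c"], auto)
  have inner: "distr (lborel \<Otimes>\<^sub>M count_space UNIV) (borel \<Otimes>\<^sub>M count_space UNIV)
      (\<lambda>(x::real, n::int). (x - b, n - c)) = lborel \<Otimes>\<^sub>M count_space UNIV"
    by (subst pair_measure_distr[symmetric])
      (simp_all add: real int sigma_finite_measure_count_space)
  have "M3 = distr M3 (borel \<Otimes>\<^sub>M (borel \<Otimes>\<^sub>M count_space UNIV))
      (\<lambda>(x, z). (x - a, (\<lambda>(x::real, n::int). (x - b, n - c)) z))"
    unfolding M3_def
    by (subst pair_measure_distr[symmetric])
      (simp_all add: real inner sigma_finite_measure_real_int)
  also have "\<dots> = distr M3 M3 (\<lambda>x. x - y)"
    by (rule distr_cong) (auto simp: y M3_def intro!: sets_pair_measure_cong)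
  finally show ?thesis ..
qed

lemma nn_integral_M3_translate:
  assumes [measurable]: "g \<in> borel_measurable M3"
  shows "(\<integral>\<^sup>+x. g (x - y) \<partial>M3) = integral\<^sup>N M3 g"
  using nn_integral_distr[of "\<lambda>x. x - y" M3 M3 g] by (simp add: distr_M3_translate)

lemma nn_integral_M3_iterated:
  assumes "h \<in> borel_measurable M3"
  shows "integral\<^sup>N M3 h =
    (\<integral>\<^sup>+\<xi>. \<integral>\<^sup>+\<eta>. \<integral>\<^sup>+\<tau>. h (\<tau>, \<xi>, \<eta>) \<partial>lborel \<partial>count_space UNIV \<partial>lborel)"
proof -
  interpret pair_sigma_finite lborel "(lborel :: real measure) \<Otimes>\<^sub>M count_space (UNIV :: int set)"
    by (intro pair_sigma_finite.intro lborel.sigma_finite_measure_axioms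
        sigma_finite_measure_real_int)
  have [measurable]: "h \<in> borel_measurable (lborel \<Otimes>\<^sub>M (lborel \<Otimes>\<^sub>M count_space UNIV))"
    using assms unfolding M3_def .
  have "integral\<^sup>N M3 h = (\<integral>\<^sup>+z. \<integral>\<^sup>+\<tau>. h (\<tau>, z) \<partial>lborel \<partial>(lborel \<Otimes>\<^sub>M count_space UNIV))"
    unfolding M3_def by (rule nn_integral_snd[symmetric]) measurable
  also have "\<dots> = (\<integral>\<^sup>+\<xi>. \<integral>\<^sup>+\<eta>. \<integral>\<^sup>+\<tau>. h (\<tau>, \<xi>, \<eta>) \<partial>lborel \<partial>count_space UNIV \<partial>lborel)"
    by (rule sigma_finite_measure.nn_integral_fst[OF sigma_finite_measure_count_space, symmetric,
          simplified]) measurable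
  finally show ?thesis .
qed

lemma conv3_eq_integral: "conv3 f g x = (\<integral>y. f y * g (x - y) \<partial>M3)"
  by (cases x) (auto simp: conv3_def split: prod.split intro!: Bochner_Integration.integral_cong)

lemma L2norm_nonneg: "L2norm f \<ge> 0"
  unfolding L2norm_def by (simp add: integral_nonneg_AE)

lemma nn_integral_norm_sq:
  assumes "in_L2 f"
  shows "(\<integral>\<^sup>+x. ennreal ((cmod (f x))\<^sup>2) \<partial>M3) = ennreal ((L2norm f)\<^sup>2)"
  using assms unfolding in_L2_def L2norm_def
  by (simp add: nn_integral_eq_integral integral_nonneg_AE)

lemma norm_conv3_sq_le:
  assumes [measurable]: "f1 \<in> borel_measurable M3" "f2 \<in> borel_measurable M3"
    and "supp3 f1 \<subseteq> E1" "supp3 f2 \<subseteq> E2"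
    and [measurable]: "E1 \<in> sets M3" "E2 \<in> sets M3"
  shows "ennreal ((cmod (conv3 f1 f2 x))\<^sup>2) \<le> emeasure M3 {y \<in> E1. x - y \<in> E2} *
    (\<integral>\<^sup>+y. ennreal ((cmod (f1 y))\<^sup>2) * ennreal ((cmod (f2 (x - y)))\<^sup>2) \<partial>M3)"
proof -
  define a :: "pt \<Rightarrow> ennreal" where "a y = indicator {y \<in> E1. x - y \<in> E2} y" for y
  define b where "b y = ennreal (cmod (f1 y)) * ennreal (cmod (f2 (x - y)))" for y
  have E_meas: "{y \<in> E1. x - y \<in> E2} \<in> sets M3"
    by measurable
  have b_eq: "b y = a y * b y" for y
    using assms(3,4) by (auto simp: a_def b_def supp3_def indicator_def)
  have "ennreal (cmod (conv3 f1 f2 x)) \<le> (\<integral>\<^sup>+y. b y \<partial>M3)"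
  proof (cases "integrable M3 (\<lambda>y. f1 y * f2 (x - y))")
    case True
    then show ?thesis
      unfolding conv3_eq_integral b_def
      by (auto simp: norm_mult ennreal_mult intro: order_trans[OF integral_norm_bound_ennreal])
  qed (simp add: conv3_eq_integral not_integrable_integral_eq)
  also have "\<dots> = (\<integral>\<^sup>+y. a y * b y \<partial>M3)"
    by (rule nn_integral_cong) (rule b_eq)
  finally have conv_le: "ennreal (cmod (conv3 f1 f2 x)) \<le> (\<integral>\<^sup>+y. a y * b y \<partial>M3)" .
  have "ennreal ((cmod (conv3 f1 f2 x))\<^sup>2) = (ennreal (cmod (conv3 f1 f2 x)))\<^sup>2"
    by (simp add: ennreal_power)
  also have "\<dots> \<le> (\<integral>\<^sup>+y. a y * b y \<partial>M3)\<^sup>2"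
    using conv_le by (rule power_mono) simp
  also have "\<dots> \<le> (\<integral>\<^sup>+y. (a y)\<^sup>2 \<partial>M3) * (\<integral>\<^sup>+y. (b y)\<^sup>2 \<partial>M3)"
    by (rule Cauchy_Schwarz_nn_integral) (auto simp: a_def b_def)
  also have "\<dots> = emeasure M3 {y \<in> E1. x - y \<in> E2} *
      (\<integral>\<^sup>+y. ennreal ((cmod (f1 y))\<^sup>2) * ennreal ((cmod (f2 (x - y)))\<^sup>2) \<partial>M3)"
  proof -
    have "(a y)\<^sup>2 = a y" for y
      by (simp add: a_def indicator_def)
    moreover have "(b y)\<^sup>2 = ennreal ((cmod (f1 y))\<^sup>2) * ennreal ((cmod (f2 (x - y)))\<^sup>2)" for y
      by (simp add: b_def power_mult_distrib ennreal_power)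
    ultimately show ?thesis
      by (simp add: a_def nn_integral_indicator[OF E_meas])
  qed
  finally show ?thesis .
qed

lemma nn_integral_convolution_sq:
  assumes "in_L2 f1" "in_L2 f2"
  shows "(\<integral>\<^sup>+x. \<integral>\<^sup>+y. ennreal ((cmod (f1 y))\<^sup>2) * ennreal ((cmod (f2 (x - y)))\<^sup>2) \<partial>M3 \<partial>M3)
    = ennreal ((L2norm f1)\<^sup>2) * ennreal ((L2norm f2)\<^sup>2)"
proof -
  have [measurable]: "f1 \<in> borel_measurable M3" "f2 \<in> borel_measurable M3"
    using assms unfolding in_L2_def by auto
  have "(\<integral>\<^sup>+x. \<integral>\<^sup>+y. ennreal ((cmod (f1 y))\<^sup>2) * ennreal ((cmod (f2 (x - y)))\<^sup>2) \<partial>M3 \<partial>M3)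
      = (\<integral>\<^sup>+y. ennreal ((cmod (f1 y))\<^sup>2) * (\<integral>\<^sup>+x. ennreal ((cmod (f2 (x - y)))\<^sup>2) \<partial>M3) \<partial>M3)"
    by (subst pair_sigma_finite.Fubini'[OF pair_sigma_finite_M3])
      (simp_all add: nn_integral_cmult)
  also have "\<dots> = (\<integral>\<^sup>+y. ennreal ((cmod (f1 y))\<^sup>2) * ennreal ((L2norm f2)\<^sup>2) \<partial>M3)"
    by (simp add: nn_integral_M3_translate[where g="\<lambda>x. ennreal ((cmod (f2 x))\<^sup>2)"]
        nn_integral_norm_sq[OF assms(2)])
  also have "\<dots> = ennreal ((L2norm f1)\<^sup>2) * ennreal ((L2norm f2)\<^sup>2)"
    by (simp add: nn_integral_multc nn_integral_norm_sq[OF assms(1)])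
  finally show ?thesis .
qed

lemma nn_integral_norm_conv3_sq_le:
  assumes "in_L2 f1" "in_L2 f2" and "supp3 f1 \<subseteq> E1" "supp3 f2 \<subseteq> E2"
    and "E1 \<in> sets M3" "E2 \<in> sets M3" and "B \<ge> 0"
    and measure_le: "\<And>x. emeasure M3 {y \<in> E1. x - y \<in> E2} \<le> ennreal B"
  shows "(\<integral>\<^sup>+x. ennreal ((cmod (conv3 f1 f2 x))\<^sup>2) \<partial>M3) \<le> ennreal (B * (L2norm f1)\<^sup>2 * (L2norm f2)\<^sup>2)"
proof -
  have [measurable]: "f1 \<in> borel_measurable M3" "f2 \<in> borel_measurable M3"
    using assms(1,2) unfolding in_L2_def by auto
  define H where "H x = (\<integral>\<^sup>+y. ennreal ((cmod (f1 y))\<^sup>2) * ennreal ((cmod (f2 (x - y)))\<^sup>2) \<partial>M3)" for x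
  have H_meas: "H \<in> borel_measurable M3"
    unfolding H_def
    by (rule sigma_finite_measure.borel_measurable_nn_integral[OF sigma_finite_measure_M3,
          unfolded split_beta']) measurable
  have "ennreal ((cmod (conv3 f1 f2 x))\<^sup>2) \<le> ennreal B * H x" for x
  proof -
    have "ennreal ((cmod (conv3 f1 f2 x))\<^sup>2) \<le> emeasure M3 {y \<in> E1. x - y \<in> E2} * H x"
      unfolding H_def by (rule norm_conv3_sq_le) (use assms(3-6) in auto)
    also have "\<dots> \<le> ennreal B * H x"
      by (rule mult_right_mono[OF measure_le]) simp
    finally show ?thesis .
  qed
  then have "(\<integral>\<^sup>+x. ennreal ((cmod (conv3 f1 f2 x))\<^sup>2) \<partial>M3) \<le> (\<integral>\<^sup>+x. ennreal B * H x \<partial>M3)"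
    by (rule nn_integral_mono)
  also have "\<dots> = ennreal B * integral\<^sup>N M3 H"
    by (rule nn_integral_cmult[OF H_meas])
  also have "integral\<^sup>N M3 H = ennreal ((L2norm f1)\<^sup>2) * ennreal ((L2norm f2)\<^sup>2)"
    unfolding H_def by (rule nn_integral_convolution_sq[OF assms(1,2)])
  also have "ennreal B * (ennreal ((L2norm f1)\<^sup>2) * ennreal ((L2norm f2)\<^sup>2))
      = ennreal (B * (L2norm f1)\<^sup>2 * (L2norm f2)\<^sup>2)"
    using \<open>B \<ge> 0\<close> by (simp add: ennreal_mult mult.assoc)
  finally show ?thesis .
qed

lemma L2norm_conv3_le:
  assumes "in_L2 f1" "in_L2 f2" and "supp3 f1 \<subseteq> E1" "supp3 f2 \<subseteq> E2"
    and "E1 \<in> sets M3" "E2 \<in> sets M3" and "B \<ge> 0"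
    and "\<And>x. emeasure M3 {y \<in> E1. x - y \<in> E2} \<le> ennreal B"
  shows "in_L2 (conv3 f1 f2) \<and> L2norm (conv3 f1 f2) \<le> sqrt B * L2norm f1 * L2norm f2"
proof -
  have [measurable]: "f1 \<in> borel_measurable M3" "f2 \<in> borel_measurable M3"
    using assms(1,2) unfolding in_L2_def by auto
  have conv_meas: "conv3 f1 f2 \<in> borel_measurable M3"
    unfolding conv3_eq_integral[abs_def]
    by (rule sigma_finite_measure.borel_measurable_lebesgue_integral[OF sigma_finite_measure_M3,
          unfolded split_beta']) measurable
  note bound = nn_integral_norm_conv3_sq_le[OF assms]
  have L2: "in_L2 (conv3 f1 f2)"
    unfolding in_L2_def
  proof (intro conjI conv_meas integrableI_bounded)
    show "(\<integral>\<^sup>+x. ennreal (norm ((cmod (conv3 f1 f2 x))\<^sup>2)) \<partial>M3) < \<infinity>"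
      using le_less_trans[OF bound ennreal_less_top] by simp
  qed (use conv_meas in measurable)
  then have "(L2norm (conv3 f1 f2))\<^sup>2 \<le> B * (L2norm f1)\<^sup>2 * (L2norm f2)\<^sup>2"
    using bound \<open>B \<ge> 0\<close> by (simp add: nn_integral_norm_sq)
  then have "L2norm (conv3 f1 f2) \<le> sqrt (B * (L2norm f1)\<^sup>2 * (L2norm f2)\<^sup>2)"
    by (rule real_le_rsqrt)
  with L2 show ?thesis
    by (simp add: real_sqrt_mult L2norm_nonneg)
qed

section \<open>Lattice points near a parabola\<close>

lemma emeasure_int_interval_le:
  "emeasure (count_space UNIV) {t::int. u \<le> of_int t \<and> of_int t \<le> v} \<le> ennreal (v - u + 1)"
proof -
  have eq: "{t::int. u \<le> of_int t \<and> of_int t \<le> v} = {\<lceil>u\<rceil>..\<lfloor>v\<rfloor>}"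
    by (auto simp: ceiling_le_iff le_floor_iff)
  have "emeasure (count_space UNIV) {\<lceil>u\<rceil>..\<lfloor>v\<rfloor>} \<le> ennreal (v - u + 1)"
  proof (cases "\<lceil>u\<rceil> \<le> \<lfloor>v\<rfloor>")
    case True
    then have "real (card {\<lceil>u\<rceil>..\<lfloor>v\<rfloor>}) \<le> v - u + 1"
      using of_int_floor_le[of v] le_of_int_ceiling[of u] by (simp, linarith)
    then show ?thesis
      by (simp add: ennreal_of_nat_eq_real_of_nat ennreal_leI)
  qed simp
  then show ?thesis
    unfolding eq .
qed

lemma sqrt_add_minus_sqrt_diff_le:
  fixes q m :: real
  assumes "0 < m" "m < q"
  shows "sqrt (q + m) - sqrt (q - m) \<le> 2 * m / sqrt q"
proof -
  have "(sqrt (q + m) - sqrt (q - m)) * (sqrt (q + m) + sqrt (q - m)) = 2 * m"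
    using assms by (simp add: algebra_simps flip: power2_eq_square)
  moreover have "sqrt q \<le> sqrt (q + m) + sqrt (q - m)"
    using assms by (simp add: add_increasing2)
  moreover have "sqrt (q + m) - sqrt (q - m) \<ge> 0"
    using assms by simp
  ultimately have "(sqrt (q + m) - sqrt (q - m)) * sqrt q \<le> 2 * m"
    by (metis mult_left_mono)
  then show ?thesis
    using assms by (simp add: field_simps)
qed

lemma emeasure_near_square_le_small:
  fixes t0 q m :: real
  assumes "\<bar>q\<bar> \<le> m" "q \<noteq> 0"
  shows "emeasure (count_space UNIV) {t::int. \<bar>(of_int t - t0)\<^sup>2 - q\<bar> \<le> m}
    \<le> ennreal (2 + 4 * m / sqrt \<bar>q\<bar>)"
proof -
  have "m > 0"
    using assms by linarith
  define r where "r = sqrt (2 * m)"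
  have "{t::int. \<bar>(of_int t - t0)\<^sup>2 - q\<bar> \<le> m} \<subseteq> {t. t0 - r \<le> of_int t \<and> of_int t \<le> t0 + r}"
  proof safe
    fix t :: int
    assume "\<bar>(of_int t - t0)\<^sup>2 - q\<bar> \<le> m"
    with assms have "\<bar>of_int t - t0\<bar>\<^sup>2 \<le> 2 * m"
      by simp
    then have "\<bar>of_int t - t0\<bar> \<le> r"
      unfolding r_def by (rule real_le_rsqrt)
    then show "t0 - r \<le> of_int t" "of_int t \<le> t0 + r"
      by auto
  qed
  then have "emeasure (count_space UNIV) {t::int. \<bar>(of_int t - t0)\<^sup>2 - q\<bar> \<le> m} \<le> ennreal (2 * r + 1)"
    using emeasure_int_interval_le[of "t0 - r" "t0 + r"]
    by (auto dest!: emeasure_mono[of _ _ "count_space UNIV"])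
  also have "\<dots> \<le> ennreal (2 + 4 * m / sqrt \<bar>q\<bar>)"
  proof (intro ennreal_leI)
    have "2 * r * sqrt \<bar>q\<bar> \<le> 2 * r * sqrt m"
      using assms by (intro mult_left_mono) (auto simp: r_def)
    also have "\<dots> = 2 * sqrt 2 * m"
      using assms by (simp add: r_def real_sqrt_mult)
    also have "\<dots> \<le> 4 * m"
      using \<open>m > 0\<close> sqrt2_less_2 by simp
    finally have "2 * r \<le> 4 * m / sqrt \<bar>q\<bar>"
      using assms by (simp add: field_simps)
    then show "2 * r + 1 \<le> 2 + 4 * m / sqrt \<bar>q\<bar>"
      by linarith
  qed
  finally show ?thesis .
qed

lemma emeasure_near_square_le_large:
  fixes t0 q m :: real
  assumes "0 < m" "m < q"
  shows "emeasure (count_space UNIV) {t::int. \<bar>(of_int t - t0)\<^sup>2 - q\<bar> \<le> m}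
    \<le> ennreal (2 + 4 * m / sqrt \<bar>q\<bar>)"
proof -
  define lo where "lo = sqrt (q - m)"
  define hi where "hi = sqrt (q + m)"
  let ?A = "{t. t0 + lo \<le> of_int t \<and> of_int t \<le> t0 + hi}"
  let ?B = "{t. t0 - hi \<le> of_int t \<and> of_int t \<le> t0 - lo}"
  let ?count = "emeasure (count_space (UNIV :: int set))"
  have "lo \<le> hi"
    using assms unfolding lo_def hi_def by simp
  have "{t::int. \<bar>(of_int t - t0)\<^sup>2 - q\<bar> \<le> m} \<subseteq> ?A \<union> ?B"
  proof
    fix t :: int
    assume "t \<in> {t::int. \<bar>(of_int t - t0)\<^sup>2 - q\<bar> \<le> m}"
    then have "q - m \<le> (of_int t - t0)\<^sup>2" "(of_int t - t0)\<^sup>2 \<le> q + m"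
      by (simp_all add: abs_le_iff)
    then have "lo \<le> \<bar>of_int t - t0\<bar>" "\<bar>of_int t - t0\<bar> \<le> hi"
      unfolding lo_def hi_def by (metis real_sqrt_abs real_sqrt_le_mono)+
    then show "t \<in> ?A \<union> ?B"
      by (auto simp: abs_if split: if_splits)
  qed
  then have "?count {t::int. \<bar>(of_int t - t0)\<^sup>2 - q\<bar> \<le> m} \<le> ?count ?A + ?count ?B"
    by (intro order_trans[OF emeasure_mono emeasure_subadditive]) simp_all
  also have "\<dots> \<le> ennreal (hi - lo + 1) + ennreal (hi - lo + 1)"
    using emeasure_int_interval_le[of "t0 + lo" "t0 + hi"]
      emeasure_int_interval_le[of "t0 - hi" "t0 - lo"]
    by (intro add_mono) (simp_all add: algebra_simps)
  also have "\<dots> = ennreal ((hi - lo + 1) + (hi - lo + 1))"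
    by (rule ennreal_plus[symmetric]) (use \<open>lo \<le> hi\<close> in auto)
  also have "\<dots> \<le> ennreal (2 + 4 * m / sqrt \<bar>q\<bar>)"
  proof (intro ennreal_leI)
    have "hi - lo \<le> 2 * m / sqrt \<bar>q\<bar>"
      using sqrt_add_minus_sqrt_diff_le[OF assms] assms by (simp add: lo_def hi_def)
    then show "(hi - lo + 1) + (hi - lo + 1) \<le> 2 + 4 * m / sqrt \<bar>q\<bar>"
      using assms by (simp add: field_simps)
  qed
  finally show ?thesis .
qed

lemma emeasure_near_square_le:
  fixes t0 q m :: real
  assumes "m > 0" "q \<noteq> 0"
  shows "emeasure (count_space UNIV) {t::int. \<bar>(of_int t - t0)\<^sup>2 - q\<bar> \<le> m}
    \<le> ennreal (2 + 4 * m / sqrt \<bar>q\<bar>)"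
proof -
  consider "\<bar>q\<bar> \<le> m" | "q > m" | "q < - m"
    by linarith
  then show ?thesis
  proof cases
    case 3
    then have "{t::int. \<bar>(of_int t - t0)\<^sup>2 - q\<bar> \<le> m} = {}"
      by (auto simp: abs_le_iff) (smt (verit) zero_le_power2)
    then show ?thesis
      by simp
  qed (use assms emeasure_near_square_le_small emeasure_near_square_le_large in auto)
qed

lemma emeasure_quadratic_level_le:
  fixes a t0 c M :: real
  assumes "a \<noteq> 0" "M > 0" "c \<noteq> 0"
  shows "emeasure (count_space UNIV) {t::int. \<bar>a * (of_int t - t0)\<^sup>2 - c\<bar> \<le> M}
    \<le> ennreal (2 + 4 * M / sqrt (\<bar>a\<bar> * \<bar>c\<bar>))"
proof -
  have "\<bar>a * x - c\<bar> \<le> M \<longleftrightarrow> \<bar>x - c / a\<bar> \<le> M / \<bar>a\<bar>" for x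
  proof -
    have "\<bar>a * x - c\<bar> = \<bar>a\<bar> * \<bar>x - c / a\<bar>"
      using assms by (simp add: abs_mult [symmetric] algebra_simps)
    then show ?thesis
      using assms by (simp add: field_simps)
  qed
  moreover have "4 * (M / \<bar>a\<bar>) / sqrt \<bar>c / a\<bar> = 4 * M / sqrt (\<bar>a\<bar> * \<bar>c\<bar>)"
    using assms by (simp add: real_sqrt_divide real_sqrt_mult field_simps real_sqrt_abs2 abs_div)
  ultimately show ?thesis
    using emeasure_near_square_le[of "M / \<bar>a\<bar>" "c / a" t0] assms by simp
qed

section \<open>Integrals of inverse square roots\<close>

text \<open>The value \<open>\<infinity>\<close> at \<open>0\<close> makes the lattice point bound \<open>emeasure_eta_le\<close> hold trivially
  when the vertex value vanishes.\<close>

definition inv_sqrt_abs :: "real \<Rightarrow> ennreal" where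
  "inv_sqrt_abs u = (if u = 0 then \<infinity> else ennreal (1 / sqrt \<bar>u\<bar>))"

lemma inv_sqrt_abs_measurable[measurable]: "inv_sqrt_abs \<in> borel_measurable borel"
  unfolding inv_sqrt_abs_def by measurable

lemma inv_sqrt_abs_antimono: "\<bar>u\<bar> \<le> \<bar>v\<bar> \<Longrightarrow> inv_sqrt_abs v \<le> inv_sqrt_abs u"
  unfolding inv_sqrt_abs_def by (auto intro!: ennreal_leI divide_left_mono simp: mult_pos_pos)

lemma inv_sqrt_abs_mult:
  assumes "\<beta> > 0"
  shows "inv_sqrt_abs (\<beta> * u) = ennreal (1 / sqrt \<beta>) * inv_sqrt_abs u"
  using assms
  by (auto simp: inv_sqrt_abs_def abs_mult real_sqrt_mult simp flip: ennreal_mult)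

lemma nn_integral_inv_sqrt_abs_Icc_0:
  assumes "w \<ge> 0"
  shows "(\<integral>\<^sup>+u. indicator {0..w} u * inv_sqrt_abs u \<partial>lborel) = ennreal (2 * sqrt w)"
proof -
  have "((\<lambda>u. u powr (-1/2)) has_integral (w powr (-1/2 + 1) / (-1/2 + 1))) {0..w}"
    using assms by (intro has_integral_powr_from_0) auto
  then have "(\<integral>\<^sup>+u. ennreal (indicator {0..w} u * u powr (-1/2)) \<partial>lborel) = ennreal (2 * sqrt w)"
    using assms
    by (subst nn_integral_has_integral_lebesgue) (auto simp: powr_half_sqrt mult.commute)
  moreover have "(\<integral>\<^sup>+u. indicator {0..w} u * inv_sqrt_abs u \<partial>lborel)
      = (\<integral>\<^sup>+u. ennreal (indicator {0..w} u * u powr (-1/2)) \<partial>lborel)"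
  proof (intro nn_integral_cong_AE eventually_mono[OF AE_lborel_singleton[of 0]])
    fix u :: real
    assume "u \<noteq> 0"
    then show "indicator {0..w} u * inv_sqrt_abs u = ennreal (indicator {0..w} u * u powr (-1/2))"
      by (auto simp: inv_sqrt_abs_def indicator_def powr_minus_divide powr_half_sqrt)
  qed
  ultimately show ?thesis
    by simp
qed

lemma nn_integral_inv_sqrt_abs_centered_le:
  assumes "w \<ge> 0"
  shows "(\<integral>\<^sup>+s. indicator {z - w..z + w} s * inv_sqrt_abs (s - z) \<partial>lborel) \<le> ennreal (4 * sqrt w)"
proof -
  have half: "(\<integral>\<^sup>+s. indicator I s * inv_sqrt_abs (s - z) \<partial>lborel) = ennreal (2 * sqrt w)"
    if "I = {z..z + w} \<and> c = 1 \<or> I = {z - w..z} \<and> c = -1" for I and c :: real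
  proof -
    have "(\<integral>\<^sup>+s. indicator I s * inv_sqrt_abs (s - z) \<partial>lborel)
        = (\<integral>\<^sup>+u. indicator I (z + c * u) * inv_sqrt_abs (z + c * u - z) \<partial>lborel)"
      using that
      by (subst lborel_real_affine[of c z]) (auto simp: nn_integral_density nn_integral_distr)
    also have "\<dots> = (\<integral>\<^sup>+u. indicator {0..w} u * inv_sqrt_abs u \<partial>lborel)"
      using that by (intro nn_integral_cong) (auto simp: indicator_def inv_sqrt_abs_def)
    finally show ?thesis
      using nn_integral_inv_sqrt_abs_Icc_0[OF assms] by simp
  qed
  have "(\<integral>\<^sup>+s. indicator {z - w..z + w} s * inv_sqrt_abs (s - z) \<partial>lborel)
      \<le> (\<integral>\<^sup>+s. indicator {z..z + w} s * inv_sqrt_abs (s - z)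
          + indicator {z - w..z} s * inv_sqrt_abs (s - z) \<partial>lborel)"
    by (intro nn_integral_mono) (auto simp: indicator_def)
  also have "\<dots> = ennreal (2 * sqrt w) + ennreal (2 * sqrt w)"
    using half[of "{z..z + w}" 1] half[of "{z - w..z}" "-1"] by (subst nn_integral_add) auto
  also have "\<dots> = ennreal (4 * sqrt w)"
    using assms by (simp flip: ennreal_plus)
  finally show ?thesis .
qed

lemma steeply_decreasing_abs_ge_dist:
  fixes c :: "real \<Rightarrow> real"
  assumes "lo \<le> hi" "\<beta> > 0" and cont: "continuous_on {lo..hi} c"
    and steep: "\<And>s s'. lo \<le> s' \<Longrightarrow> s' \<le> s \<Longrightarrow> s \<le> hi \<Longrightarrow> \<beta> * (s - s') \<le> c s' - c s"
  obtains z where "z \<in> {lo..hi}" "\<And>s. s \<in> {lo..hi} \<Longrightarrow> \<beta> * \<bar>s - z\<bar> \<le> \<bar>c s\<bar>"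
proof -
  have dist_le: "\<beta> * \<bar>s - z\<bar> \<le> \<bar>c s\<bar>"
    if "z \<in> {lo..hi}" "s \<in> {lo..hi}" "s < z \<Longrightarrow> c z \<ge> 0" "z < s \<Longrightarrow> c z \<le> 0" for z s
    using steep[of s z] steep[of z s] that \<open>\<beta> > 0\<close>
    by (cases s z rule: linorder_cases) (auto simp: abs_if)
  consider "c hi \<ge> 0" | "c lo \<le> 0" | "c hi < 0" "c lo > 0"
    by linarith
  then show ?thesis
  proof cases
    case 1
    with \<open>lo \<le> hi\<close> show ?thesis
      by (intro that[of hi] dist_le) auto
  next
    case 2
    with \<open>lo \<le> hi\<close> show ?thesis
      by (intro that[of lo] dist_le) auto
  next
    case 3
    then obtain z where "z \<in> {lo..hi}" "c z = 0"
      using IVT2'[of c hi 0 lo] \<open>lo \<le> hi\<close> cont by auto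
    then show ?thesis
      by (intro that[of z] dist_le) auto
  qed
qed

lemma nn_integral_inv_sqrt_abs_steep_le:
  fixes c :: "real \<Rightarrow> real"
  assumes "lo \<le> hi" "\<beta> > 0" "continuous_on {lo..hi} c"
    and "\<And>s s'. lo \<le> s' \<Longrightarrow> s' \<le> s \<Longrightarrow> s \<le> hi \<Longrightarrow> \<beta> * (s - s') \<le> c s' - c s"
  shows "(\<integral>\<^sup>+s. indicator {lo..hi} s * inv_sqrt_abs (c s) \<partial>lborel)
    \<le> ennreal (4 * sqrt ((hi - lo) / \<beta>))"
proof -
  obtain z where z: "z \<in> {lo..hi}" and dist_le: "\<And>s. s \<in> {lo..hi} \<Longrightarrow> \<beta> * \<bar>s - z\<bar> \<le> \<bar>c s\<bar>"
    using steeply_decreasing_abs_ge_dist[OF assms] by blast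
  define w where "w = hi - lo"
  have "(\<integral>\<^sup>+s. indicator {lo..hi} s * inv_sqrt_abs (c s) \<partial>lborel)
      \<le> (\<integral>\<^sup>+s. ennreal (1 / sqrt \<beta>) * (indicator {z - w..z + w} s * inv_sqrt_abs (s - z)) \<partial>lborel)"
  proof (intro nn_integral_mono)
    fix s
    show "indicator {lo..hi} s * inv_sqrt_abs (c s)
        \<le> ennreal (1 / sqrt \<beta>) * (indicator {z - w..z + w} s * inv_sqrt_abs (s - z))"
    proof (cases "s \<in> {lo..hi}")
      case True
      then have "inv_sqrt_abs (c s) \<le> inv_sqrt_abs (\<beta> * (s - z))"
        using dist_le[of s] \<open>\<beta> > 0\<close> by (intro inv_sqrt_abs_antimono) (simp add: abs_mult)
      with True z show ?thesis
        by (simp add: inv_sqrt_abs_mult[OF \<open>\<beta> > 0\<close>] w_def indicator_def)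
    qed simp
  qed
  also have "\<dots> = ennreal (1 / sqrt \<beta>) *
      (\<integral>\<^sup>+s. indicator {z - w..z + w} s * inv_sqrt_abs (s - z) \<partial>lborel)"
    by (rule nn_integral_cmult) simp
  also have "\<dots> \<le> ennreal (1 / sqrt \<beta>) * ennreal (4 * sqrt w)"
    using \<open>lo \<le> hi\<close>
    by (intro mult_left_mono nn_integral_inv_sqrt_abs_centered_le) (auto simp: w_def)
  also have "\<dots> = ennreal (4 * sqrt (w / \<beta>))"
    using \<open>\<beta> > 0\<close> \<open>lo \<le> hi\<close> by (simp add: w_def real_sqrt_divide flip: ennreal_mult)
  finally show ?thesis
    unfolding w_def .
qed

section \<open>The dispersion relation\<close>

definition spow :: "real \<Rightarrow> real \<Rightarrow> real" where
  "spow \<alpha> s = s * \<bar>s\<bar> powr \<alpha>"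

lemma spow_minus: "spow \<alpha> (- s) = - spow \<alpha> s"
  by (simp add: spow_def)

lemma has_real_derivative_spow:
  assumes "s \<noteq> 0"
  shows "(spow \<alpha> has_real_derivative (\<alpha> + 1) * \<bar>s\<bar> powr \<alpha>) (at s)"
proof -
  have pos: "(spow \<alpha> has_real_derivative (\<alpha> + 1) * \<bar>s\<bar> powr \<alpha>) (at s)" if "s > 0" for s
  proof -
    have "\<forall>\<^sub>F y in nhds s. spow \<alpha> y = y powr (\<alpha> + 1)"
      using eventually_nhds_in_open[of "{0<..}" s] \<open>s > 0\<close>
      by (auto simp: spow_def powr_add elim!: eventually_mono)
    then show ?thesis
      using has_real_derivative_powr[OF \<open>s > 0\<close>, of "\<alpha> + 1"] \<open>s > 0\<close>
      by (subst DERIV_cong_ev[OF refl _ refl]) simp_all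
  qed
  show ?thesis
  proof (cases "s > 0")
    case False
    with assms have "- s > 0"
      by simp
    have "((\<lambda>y. - spow \<alpha> (- y)) has_real_derivative - ((\<alpha> + 1) * \<bar>- s\<bar> powr \<alpha> * - 1)) (at s)"
      by (intro DERIV_minus DERIV_chain2[where f="spow \<alpha>" and g=uminus, OF pos[OF \<open>- s > 0\<close>]])
        (auto intro!: derivative_eq_intros)
    then show ?thesis
      by (simp add: spow_minus)
  qed (rule pos)
qed

definition dispersion_sum :: "real \<Rightarrow> real \<Rightarrow> real \<Rightarrow> real" where
  "dispersion_sum \<alpha> \<xi> s = spow \<alpha> s + spow \<alpha> (\<xi> - s)"

lemma has_real_derivative_dispersion_sum:
  assumes "s \<noteq> 0" "\<xi> - s \<noteq> 0"
  shows "(dispersion_sum \<alpha> \<xi> has_real_derivative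
    (\<alpha> + 1) * \<bar>s\<bar> powr \<alpha> - (\<alpha> + 1) * \<bar>\<xi> - s\<bar> powr \<alpha>) (at s)"
proof -
  have "((\<lambda>s. spow \<alpha> (\<xi> - s)) has_real_derivative (\<alpha> + 1) * \<bar>\<xi> - s\<bar> powr \<alpha> * - 1) (at s)"
    by (rule DERIV_chain2[where f="spow \<alpha>" and g="\<lambda>s. \<xi> - s",
          OF has_real_derivative_spow[OF assms(2)]])
      (auto intro!: derivative_eq_intros)
  from DERIV_add[OF has_real_derivative_spow[OF assms(1)] this] show ?thesis
    unfolding dispersion_sum_def[abs_def] by simp
qed

lemma dispersion_sum_derivative_ge:
  fixes \<alpha> \<xi> \<theta> :: real
  assumes "\<alpha> \<ge> 1" "2 * \<bar>\<xi> - \<theta>\<bar> \<le> \<bar>\<theta>\<bar>"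
  shows "\<bar>\<theta>\<bar> powr \<alpha> \<le> (\<alpha> + 1) * \<bar>\<theta>\<bar> powr \<alpha> - (\<alpha> + 1) * \<bar>\<xi> - \<theta>\<bar> powr \<alpha>"
proof -
  have "\<bar>\<xi> - \<theta>\<bar> powr \<alpha> \<le> (\<bar>\<theta>\<bar> / 2) powr \<alpha>"
    using assms by (intro powr_mono2) auto
  also have "\<dots> = \<bar>\<theta>\<bar> powr \<alpha> / 2 powr \<alpha>"
    by (rule powr_divide)
  also have "\<dots> \<le> \<bar>\<theta>\<bar> powr \<alpha> / 2"
    using powr_mono[OF \<open>\<alpha> \<ge> 1\<close>, of 2] by (intro divide_left_mono) auto
  finally have "\<bar>\<xi> - \<theta>\<bar> powr \<alpha> \<le> \<bar>\<theta>\<bar> powr \<alpha> / 2" .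
  then have "(\<alpha> + 1) * (\<bar>\<theta>\<bar> powr \<alpha> / 2) \<le> (\<alpha> + 1) * (\<bar>\<theta>\<bar> powr \<alpha> - \<bar>\<xi> - \<theta>\<bar> powr \<alpha>)"
    using assms by (intro mult_left_mono) auto
  moreover have "\<bar>\<theta>\<bar> powr \<alpha> \<le> (\<alpha> + 1) * (\<bar>\<theta>\<bar> powr \<alpha> / 2)"
    using mult_right_mono[OF \<open>\<alpha> \<ge> 1\<close>, of "\<bar>\<theta>\<bar> powr \<alpha>"] by (simp add: field_simps)
  ultimately have "\<bar>\<theta>\<bar> powr \<alpha> \<le> (\<alpha> + 1) * (\<bar>\<theta>\<bar> powr \<alpha> - \<bar>\<xi> - \<theta>\<bar> powr \<alpha>)"
    by (rule order_trans[rotated])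
  then show ?thesis
    by (simp add: algebra_simps)
qed

lemma dispersion_sum_steep:
  assumes "\<alpha> \<ge> 1" "r > 0"
    and on_interval: "\<And>\<theta>. lo \<le> \<theta> \<Longrightarrow> \<theta> \<le> hi \<Longrightarrow> \<xi> - \<theta> \<noteq> 0 \<and> 2 * \<bar>\<xi> - \<theta>\<bar> \<le> \<bar>\<theta>\<bar> \<and> r \<le> \<bar>\<theta>\<bar>"
    and "lo \<le> s'" "s' \<le> s" "s \<le> hi"
  shows "r powr \<alpha> * (s - s') \<le> dispersion_sum \<alpha> \<xi> s - dispersion_sum \<alpha> \<xi> s'"
proof (cases "s' = s")
  case False
  with assms have "s' < s"
    by simp
  define D where "D \<theta> = (\<alpha> + 1) * \<bar>\<theta>\<bar> powr \<alpha> - (\<alpha> + 1) * \<bar>\<xi> - \<theta>\<bar> powr \<alpha>" for \<theta>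
  have "\<forall>\<theta>. s' \<le> \<theta> \<and> \<theta> \<le> s \<longrightarrow> (dispersion_sum \<alpha> \<xi> has_real_derivative D \<theta>) (at \<theta>)"
  proof (intro allI impI)
    fix \<theta>
    assume "s' \<le> \<theta> \<and> \<theta> \<le> s"
    with assms have "\<xi> - \<theta> \<noteq> 0 \<and> r \<le> \<bar>\<theta>\<bar>"
      using on_interval[of \<theta>] by auto
    with \<open>r > 0\<close> show "(dispersion_sum \<alpha> \<xi> has_real_derivative D \<theta>) (at \<theta>)"
      unfolding D_def by (intro has_real_derivative_dispersion_sum) auto
  qed
  then obtain \<theta> where \<theta>: "s' < \<theta>" "\<theta> < s"
    and mvt: "dispersion_sum \<alpha> \<xi> s - dispersion_sum \<alpha> \<xi> s' = (s - s') * D \<theta>"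
    using MVT2[OF \<open>s' < s\<close>] by blast
  have "r powr \<alpha> \<le> \<bar>\<theta>\<bar> powr \<alpha>"
    using on_interval[of \<theta>] \<theta> assms by (intro powr_mono2) auto
  also have "\<dots> \<le> D \<theta>"
    unfolding D_def using on_interval[of \<theta>] \<theta> assms by (intro dispersion_sum_derivative_ge) auto
  finally show ?thesis
    using \<open>s' < s\<close> by (simp add: mvt mult.commute mult_left_mono)
qed simp

definition vertex_value :: "real \<Rightarrow> real \<Rightarrow> real \<Rightarrow> int \<Rightarrow> real \<Rightarrow> real" where
  "vertex_value \<alpha> \<tau> \<xi> \<eta> s = \<tau> - (of_int \<eta>)\<^sup>2 / \<xi> - dispersion_sum \<alpha> \<xi> s"

lemma sum_sq_div_complete_square:
  fixes x1 x2 t e :: real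
  assumes "x1 \<noteq> 0" "x2 \<noteq> 0" "x1 + x2 \<noteq> 0"
  shows "t\<^sup>2 / x1 + (e - t)\<^sup>2 / x2
    = (1 / x1 + 1 / x2) * (t - e * x1 / (x1 + x2))\<^sup>2 + e\<^sup>2 / (x1 + x2)"
proof -
  define s where "s = x1 + x2"
  have "s \<noteq> 0"
    using assms unfolding s_def by simp
  have "1 / x1 + 1 / x2 = s / (x1 * x2)"
    unfolding s_def using assms by (simp add: field_simps)
  moreover have "t - e * x1 / s = (t * s - e * x1) / s"
    using \<open>s \<noteq> 0\<close> by (simp add: field_simps)
  ultimately have rhs: "(1 / x1 + 1 / x2) * (t - e * x1 / s)\<^sup>2 + e\<^sup>2 / s
      = ((t * s - e * x1)\<^sup>2 + e\<^sup>2 * x1 * x2) / (x1 * x2 * s)"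
    using assms \<open>s \<noteq> 0\<close> by (simp add: power_divide field_simps power2_eq_square)
  have "t\<^sup>2 / x1 + (e - t)\<^sup>2 / x2 = (s * (t\<^sup>2 * x2 + (e - t)\<^sup>2 * x1)) / (x1 * x2 * s)"
    using assms \<open>s \<noteq> 0\<close> by (simp add: field_simps power2_eq_square)
  also have "s * (t\<^sup>2 * x2 + (e - t)\<^sup>2 * x1) = (t * s - e * x1)\<^sup>2 + e\<^sup>2 * x1 * x2"
    unfolding s_def by (simp add: power2_eq_square algebra_simps)
  finally show ?thesis
    unfolding s_def[symmetric] rhs .
qed

lemma omega_sum_complete_square:
  assumes "\<xi>1 \<noteq> 0" "\<xi> - \<xi>1 \<noteq> 0" "\<xi> \<noteq> 0"
  shows "\<tau> - omega \<alpha> \<xi>1 n - omega \<alpha> (\<xi> - \<xi>1) (\<eta> - n) = vertex_value \<alpha> \<tau> \<xi> \<eta> \<xi>1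
    - (1 / \<xi>1 + 1 / (\<xi> - \<xi>1)) * (of_int n - of_int \<eta> * \<xi>1 / \<xi>)\<^sup>2"
  using sum_sq_div_complete_square[of \<xi>1 "\<xi> - \<xi>1" "of_int n" "of_int \<eta>"] assms
  by (simp add: omega_def vertex_value_def dispersion_sum_def spow_def)

lemma abs_inverse_add_inverse_ge:
  fixes x1 x2 N :: real
  assumes "x2 \<noteq> 0" "\<bar>x2\<bar> \<le> 4 * N" "2 * \<bar>x2\<bar> \<le> \<bar>x1\<bar>"
  shows "1 / (8 * N) \<le> \<bar>1 / x1 + 1 / x2\<bar>"
proof -
  have "x1 \<noteq> 0"
    using assms by auto
  have "\<bar>x1\<bar> / 2 \<le> \<bar>x1 + x2\<bar>"
    using assms abs_triangle_ineq2[of x1 "- x2"] by simp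
  have "1 / (8 * N) \<le> 1 / (2 * \<bar>x2\<bar>)"
    using assms by (intro divide_left_mono) auto
  also have "\<dots> \<le> \<bar>x1 + x2\<bar> / (\<bar>x1\<bar> * \<bar>x2\<bar>)"
    using \<open>\<bar>x1\<bar> / 2 \<le> \<bar>x1 + x2\<bar>\<close> assms \<open>x1 \<noteq> 0\<close> by (simp add: field_simps)
  also have "\<dots> = \<bar>1 / x1 + 1 / x2\<bar>"
    using assms \<open>x1 \<noteq> 0\<close> by (simp add: field_simps abs_mult)
  finally show ?thesis .
qed

section \<open>The measure of the convolution domain\<close>

lemma sets_D_set[measurable]: "D_set \<alpha> N L \<in> sets M3"
proof -
  have "D_set \<alpha> N L = {x \<in> space M3. N / 4 \<le> \<bar>fst (snd x)\<bar> \<and> \<bar>fst (snd x)\<bar> \<le> 4 * N \<and>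
      \<bar>fst x - (fst (snd x) * \<bar>fst (snd x)\<bar> powr \<alpha> + (of_int (snd (snd x)))\<^sup>2 / fst (snd x))\<bar> \<le> L}"
    by (auto simp: D_set_def A_set_def omega_def)
  also have "\<dots> \<in> sets M3"
    unfolding M3_def by measurable
  finally show ?thesis .
qed

lemma emeasure_Icc_inter_Icc_le:
  fixes u v L1 L2 :: real
  assumes "L1 \<ge> 0" "L2 \<ge> 0"
  shows "emeasure lborel ({u - L1..u + L1} \<inter> {v - L2..v + L2}) \<le> ennreal (2 * min L1 L2)"
proof -
  have "emeasure lborel ({u - L1..u + L1} \<inter> {v - L2..v + L2}) \<le> emeasure lborel {u - L1..u + L1}"
    "emeasure lborel ({u - L1..u + L1} \<inter> {v - L2..v + L2}) \<le> emeasure lborel {v - L2..v + L2}"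
    by (auto intro!: emeasure_mono)
  with assms show ?thesis
    by (cases "L1 \<le> L2") (auto simp: min_def)
qed

lemma nn_integral_tau_le:
  assumes "L1 \<ge> 0" "L2 \<ge> 0"
  shows "(\<integral>\<^sup>+\<tau>1. indicator (D_set \<alpha> N1 L1) (\<tau>1, \<xi>1, \<eta>1)
      * indicator (D_set \<alpha> N2 L2) (\<tau> - \<tau>1, \<xi> - \<xi>1, \<eta> - \<eta>1) \<partial>lborel)
    \<le> ennreal (2 * min L1 L2) * indicator {s \<in> A_set N1. \<xi> - s \<in> A_set N2} \<xi>1
      * indicator {n. \<bar>\<tau> - omega \<alpha> \<xi>1 n - omega \<alpha> (\<xi> - \<xi>1) (\<eta> - n)\<bar> \<le> L1 + L2} \<eta>1"
    (is "?lhs \<le> _ * ?I * ?J")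
proof -
  define w1 where "w1 = omega \<alpha> \<xi>1 \<eta>1"
  define w2 where "w2 = omega \<alpha> (\<xi> - \<xi>1) (\<eta> - \<eta>1)"
  let ?T = "{w1 - L1..w1 + L1} \<inter> {(\<tau> - w2) - L2..(\<tau> - w2) + L2}"
  have "?lhs = (\<integral>\<^sup>+\<tau>1. ?I * indicator ?T \<tau>1 \<partial>lborel)"
    by (intro nn_integral_cong) (auto simp: D_set_def w1_def w2_def indicator_def abs_le_iff)
  also have "\<dots> = ?I * emeasure lborel ?T"
    by (simp add: nn_integral_cmult)
  also have "\<dots> \<le> ?I * (ennreal (2 * min L1 L2) * ?J)"
  proof (cases "\<bar>\<tau> - w1 - w2\<bar> \<le> L1 + L2")
    case True
    then show ?thesis
      using emeasure_Icc_inter_Icc_le[OF assms, of w1 "\<tau> - w2"]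
      by (intro mult_left_mono) (auto simp: w1_def w2_def indicator_def)
  next
    case False
    then have "?T = {}"
      by auto
    then show ?thesis
      by simp
  qed
  finally show ?thesis
    by (simp add: mult_ac)
qed

lemma emeasure_eta_le:
  assumes "N2 > 0" "32 * N2 \<le> N1" "\<xi>1 \<in> A_set N1" "\<xi> - \<xi>1 \<in> A_set N2" "M > 0"
  shows "emeasure (count_space UNIV) {n. \<bar>\<tau> - omega \<alpha> \<xi>1 n - omega \<alpha> (\<xi> - \<xi>1) (\<eta> - n)\<bar> \<le> M}
    \<le> 2 + ennreal (4 * M * sqrt (8 * N2)) * inv_sqrt_abs (vertex_value \<alpha> \<tau> \<xi> \<eta> \<xi>1)"
proof -
  define a where "a = 1 / \<xi>1 + 1 / (\<xi> - \<xi>1)"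
  define c where "c = vertex_value \<alpha> \<tau> \<xi> \<eta> \<xi>1"
  have "\<xi> - \<xi>1 \<noteq> 0" "\<bar>\<xi> - \<xi>1\<bar> \<le> 4 * N2" "2 * \<bar>\<xi> - \<xi>1\<bar> \<le> \<bar>\<xi>1\<bar>"
    using assms by (auto simp: A_set_def)
  then have a_ge: "1 / (8 * N2) \<le> \<bar>a\<bar>"
    unfolding a_def by (rule abs_inverse_add_inverse_ge)
  moreover have "1 / (8 * N2) > 0"
    using \<open>N2 > 0\<close> by simp
  ultimately have "a \<noteq> 0"
    by auto
  show ?thesis
  proof (cases "c = 0")
    case False
    have "\<xi>1 \<noteq> 0" "\<xi> \<noteq> 0"
      using \<open>2 * \<bar>\<xi> - \<xi>1\<bar> \<le> \<bar>\<xi>1\<bar>\<close> \<open>\<xi> - \<xi>1 \<noteq> 0\<close> by auto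
    then have "{n. \<bar>\<tau> - omega \<alpha> \<xi>1 n - omega \<alpha> (\<xi> - \<xi>1) (\<eta> - n)\<bar> \<le> M}
        = {n. \<bar>a * (of_int n - of_int \<eta> * \<xi>1 / \<xi>)\<^sup>2 - c\<bar> \<le> M}"
      using omega_sum_complete_square \<open>\<xi> - \<xi>1 \<noteq> 0\<close>
      by (simp add: a_def c_def abs_minus_commute)
    also have "emeasure (count_space UNIV) \<dots> \<le> ennreal (2 + 4 * M / sqrt (\<bar>a\<bar> * \<bar>c\<bar>))"
      using a_ge \<open>N2 > 0\<close> \<open>M > 0\<close> False
      by (intro emeasure_quadratic_level_le) (auto simp: abs_le_iff)
    also have "\<dots> \<le> ennreal (2 + 4 * M * sqrt (8 * N2) * (1 / sqrt \<bar>c\<bar>))"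
    proof (intro ennreal_leI add_left_mono)
      have "sqrt (1 / (8 * N2)) * sqrt \<bar>c\<bar> \<le> sqrt (\<bar>a\<bar> * \<bar>c\<bar>)"
        using a_ge by (simp add: real_sqrt_mult mult_right_mono)
      then have "4 * M / sqrt (\<bar>a\<bar> * \<bar>c\<bar>) \<le> 4 * M / (sqrt (1 / (8 * N2)) * sqrt \<bar>c\<bar>)"
        using \<open>M > 0\<close> \<open>N2 > 0\<close> False \<open>a \<noteq> 0\<close> by (intro divide_left_mono) auto
      then show "4 * M / sqrt (\<bar>a\<bar> * \<bar>c\<bar>) \<le> 4 * M * sqrt (8 * N2) * (1 / sqrt \<bar>c\<bar>)"
        using \<open>N2 > 0\<close> by (simp add: real_sqrt_divide field_simps)
    qed
    also have "\<dots> = 2 + ennreal (4 * M * sqrt (8 * N2)) * inv_sqrt_abs c"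
      using False \<open>M > 0\<close> \<open>N2 > 0\<close> by (simp add: inv_sqrt_abs_def flip: ennreal_mult)
    finally show ?thesis
      unfolding c_def .
  qed (use \<open>M > 0\<close> \<open>N2 > 0\<close> in \<open>simp add: c_def inv_sqrt_abs_def\<close>)
qed

lemma xi_range_eq:
  "{s \<in> A_set N1. \<xi> - s \<in> A_set N2}
    = ({\<xi> - 4 * N2..\<xi> - N2 / 4} \<union> {\<xi> + N2 / 4..\<xi> + 4 * N2})
      \<inter> ({N1 / 4..4 * N1} \<union> {- 4 * N1..- N1 / 4})"
  by (auto simp: A_set_def abs_if)

lemma emeasure_xi_range_le:
  assumes "N2 \<ge> 0"
  shows "emeasure lborel {s \<in> A_set N1. \<xi> - s \<in> A_set N2} \<le> ennreal (15 * N2 / 2)"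
proof -
  have "emeasure lborel {s \<in> A_set N1. \<xi> - s \<in> A_set N2}
      \<le> emeasure lborel ({\<xi> - 4 * N2..\<xi> - N2 / 4} \<union> {\<xi> + N2 / 4..\<xi> + 4 * N2})"
    unfolding xi_range_eq by (intro emeasure_mono) auto
  also have "\<dots> \<le> emeasure lborel {\<xi> - 4 * N2..\<xi> - N2 / 4}
      + emeasure lborel {\<xi> + N2 / 4..\<xi> + 4 * N2}"
    by (rule emeasure_subadditive) auto
  also have "\<dots> = ennreal (15 * N2 / 2)"
    using assms by (simp flip: ennreal_plus)
  finally show ?thesis .
qed

lemma nn_integral_indicator_Un_le:
  assumes "A \<in> sets M" "B \<in> sets M" "f \<in> borel_measurable M"
  shows "(\<integral>\<^sup>+x. indicator (A \<union> B) x * f x \<partial>M)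
    \<le> (\<integral>\<^sup>+x. indicator A x * f x \<partial>M) + (\<integral>\<^sup>+x. indicator B x * f x \<partial>M)"
proof -
  have "(\<integral>\<^sup>+x. indicator (A \<union> B) x * f x \<partial>M) \<le> (\<integral>\<^sup>+x. indicator A x * f x + indicator B x * f x \<partial>M)"
    by (intro nn_integral_mono) (auto simp: indicator_def)
  also have "\<dots> = (\<integral>\<^sup>+x. indicator A x * f x \<partial>M) + (\<integral>\<^sup>+x. indicator B x * f x \<partial>M)"
    using assms by (intro nn_integral_add) auto
  finally show ?thesis .
qed

lemma vertex_value_measurable[measurable]: "vertex_value \<alpha> \<tau> \<xi> \<eta> \<in> borel_measurable borel"
  unfolding vertex_value_def[abs_def] dispersion_sum_def spow_def by measurable

lemma nn_integral_vertex_value_piece_le: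
  assumes "\<alpha> \<ge> 1" "N1 > 0" "N2 > 0" "32 * N2 \<le> N1" "hi - lo \<le> 4 * N2"
    and piece: "\<And>\<theta>. lo \<le> \<theta> \<Longrightarrow> \<theta> \<le> hi \<Longrightarrow> N1 / 4 \<le> \<bar>\<theta>\<bar> \<and> N2 / 4 \<le> \<bar>\<xi> - \<theta>\<bar> \<and> \<bar>\<xi> - \<theta>\<bar> \<le> 4 * N2"
  shows "(\<integral>\<^sup>+s. indicator {lo..hi} s * inv_sqrt_abs (vertex_value \<alpha> \<tau> \<xi> \<eta> s) \<partial>lborel)
    \<le> ennreal (8 * sqrt (N2 / (N1 / 4) powr \<alpha>))"
proof (cases "lo \<le> hi")
  case True
  define \<beta> where "\<beta> = (N1 / 4) powr \<alpha>"
  have "\<beta> > 0"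
    using \<open>N1 > 0\<close> by (simp add: \<beta>_def)
  have \<theta>: "\<xi> - \<theta> \<noteq> 0 \<and> 2 * \<bar>\<xi> - \<theta>\<bar> \<le> \<bar>\<theta>\<bar> \<and> N1 / 4 \<le> \<bar>\<theta>\<bar>" if "lo \<le> \<theta>" "\<theta> \<le> hi" for \<theta>
    using piece[OF that] assms(2-4) by auto
  have "(\<integral>\<^sup>+s. indicator {lo..hi} s * inv_sqrt_abs (vertex_value \<alpha> \<tau> \<xi> \<eta> s) \<partial>lborel)
      \<le> ennreal (4 * sqrt ((hi - lo) / \<beta>))"
  proof (rule nn_integral_inv_sqrt_abs_steep_le[OF True \<open>\<beta> > 0\<close>])
    have "isCont (vertex_value \<alpha> \<tau> \<xi> \<eta>) s" if "s \<in> {lo..hi}" for s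
      using \<theta>[of s] that \<open>N1 > 0\<close> unfolding vertex_value_def[abs_def]
      by (intro continuous_intros DERIV_isCont[OF has_real_derivative_dispersion_sum]) auto
    then show "continuous_on {lo..hi} (vertex_value \<alpha> \<tau> \<xi> \<eta>)"
      by (intro continuous_at_imp_continuous_on ballI)
  next
    fix s s'
    assume "lo \<le> s'" "s' \<le> s" "s \<le> hi"
    then have "\<beta> * (s - s') \<le> dispersion_sum \<alpha> \<xi> s - dispersion_sum \<alpha> \<xi> s'"
      unfolding \<beta>_def using \<theta> assms(1,2) by (intro dispersion_sum_steep) auto
    then show "\<beta> * (s - s') \<le> vertex_value \<alpha> \<tau> \<xi> \<eta> s' - vertex_value \<alpha> \<tau> \<xi> \<eta> s"
      by (simp add: vertex_value_def)
  qed
  also have "\<dots> \<le> ennreal (8 * sqrt (N2 / \<beta>))"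
  proof (intro ennreal_leI)
    have "(hi - lo) / \<beta> \<le> 2\<^sup>2 * (N2 / \<beta>)"
      using \<open>hi - lo \<le> 4 * N2\<close> \<open>\<beta> > 0\<close> by (simp add: divide_right_mono)
    then have "sqrt ((hi - lo) / \<beta>) \<le> sqrt (2\<^sup>2 * (N2 / \<beta>))"
      by (rule real_sqrt_le_mono)
    moreover have "sqrt (2\<^sup>2 * (N2 / \<beta>)) = 2 * sqrt (N2 / \<beta>)"
      unfolding real_sqrt_mult real_sqrt_abs by simp
    ultimately show "4 * sqrt ((hi - lo) / \<beta>) \<le> 8 * sqrt (N2 / \<beta>)"
      by linarith
  qed
  finally show ?thesis
    unfolding \<beta>_def .
qed simp

lemma nn_integral_xi_range_vertex_value_le:
  assumes "\<alpha> \<ge> 1" "N1 > 0" "N2 > 0" "32 * N2 \<le> N1"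
  shows "(\<integral>\<^sup>+s. indicator {s \<in> A_set N1. \<xi> - s \<in> A_set N2} s
      * inv_sqrt_abs (vertex_value \<alpha> \<tau> \<xi> \<eta> s) \<partial>lborel)
    \<le> ennreal (32 * sqrt (N2 / (N1 / 4) powr \<alpha>))"
proof -
  let ?f = "\<lambda>s. inv_sqrt_abs (vertex_value \<alpha> \<tau> \<xi> \<eta> s)"
  let ?X = "ennreal (8 * sqrt (N2 / (N1 / 4) powr \<alpha>))"
  let ?P11 = "{\<xi> - 4 * N2..\<xi> - N2 / 4} \<inter> {N1 / 4..4 * N1}"
  let ?P12 = "{\<xi> - 4 * N2..\<xi> - N2 / 4} \<inter> {- 4 * N1..- N1 / 4}"
  let ?P21 = "{\<xi> + N2 / 4..\<xi> + 4 * N2} \<inter> {N1 / 4..4 * N1}"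
  let ?P22 = "{\<xi> + N2 / 4..\<xi> + 4 * N2} \<inter> {- 4 * N1..- N1 / 4}"
  have piece: "(\<integral>\<^sup>+s. indicator ({a1..b1} \<inter> {a2..b2}) s * ?f s \<partial>lborel) \<le> ?X"
    if "b1 - a1 \<le> 4 * N2" "\<And>\<theta>. a1 \<le> \<theta> \<Longrightarrow> \<theta> \<le> b1 \<Longrightarrow> N2 / 4 \<le> \<bar>\<xi> - \<theta>\<bar> \<and> \<bar>\<xi> - \<theta>\<bar> \<le> 4 * N2"
      "\<And>\<theta>. a2 \<le> \<theta> \<Longrightarrow> \<theta> \<le> b2 \<Longrightarrow> N1 / 4 \<le> \<bar>\<theta>\<bar>" for a1 b1 a2 b2
    unfolding Int_atLeastAtMost using that
    by (intro nn_integral_vertex_value_piece_le[OF assms]) auto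
  have f_meas: "?f \<in> borel_measurable lborel"
    by measurable
  have "{s \<in> A_set N1. \<xi> - s \<in> A_set N2} = (?P11 \<union> ?P12) \<union> (?P21 \<union> ?P22)"
    unfolding xi_range_eq by blast
  then have "(\<integral>\<^sup>+s. indicator {s \<in> A_set N1. \<xi> - s \<in> A_set N2} s * ?f s \<partial>lborel)
      \<le> (\<integral>\<^sup>+s. indicator (?P11 \<union> ?P12) s * ?f s \<partial>lborel)
        + (\<integral>\<^sup>+s. indicator (?P21 \<union> ?P22) s * ?f s \<partial>lborel)"
    using f_meas by (simp add: nn_integral_indicator_Un_le)
  also have "\<dots> \<le> (\<integral>\<^sup>+s. indicator ?P11 s * ?f s \<partial>lborel) + (\<integral>\<^sup>+s. indicator ?P12 s * ?f s \<partial>lborel)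
        + ((\<integral>\<^sup>+s. indicator ?P21 s * ?f s \<partial>lborel) + (\<integral>\<^sup>+s. indicator ?P22 s * ?f s \<partial>lborel))"
    using f_meas by (intro add_mono nn_integral_indicator_Un_le) auto
  also have "\<dots> \<le> ?X + ?X + (?X + ?X)"
    using \<open>N2 > 0\<close> by (intro add_mono piece) auto
  also have "\<dots> = ennreal (32 * sqrt (N2 / (N1 / 4) powr \<alpha>))"
    using \<open>N1 > 0\<close> \<open>N2 > 0\<close> by (simp flip: ennreal_plus)
  finally show ?thesis .
qed

lemma nn_integral_xi_le:
  assumes "\<alpha> \<ge> 1" "N1 > 0" "N2 > 0" "32 * N2 \<le> N1" "K \<ge> 0"
  shows "(\<integral>\<^sup>+s. indicator {s \<in> A_set N1. \<xi> - s \<in> A_set N2} s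
      * (2 + ennreal K * inv_sqrt_abs (vertex_value \<alpha> \<tau> \<xi> \<eta> s)) \<partial>lborel)
    \<le> ennreal (15 * N2 + K * (32 * sqrt (N2 / (N1 / 4) powr \<alpha>)))"
proof -
  let ?I = "{s \<in> A_set N1. \<xi> - s \<in> A_set N2}"
  let ?f = "\<lambda>s. inv_sqrt_abs (vertex_value \<alpha> \<tau> \<xi> \<eta> s)"
  have I_meas[measurable]: "?I \<in> sets lborel"
    unfolding xi_range_eq by measurable
  have "(\<integral>\<^sup>+s. indicator ?I s * (2 + ennreal K * ?f s) \<partial>lborel)
      = (\<integral>\<^sup>+s. 2 * indicator ?I s + ennreal K * (indicator ?I s * ?f s) \<partial>lborel)"
    by (intro nn_integral_cong) (simp add: algebra_simps)
  also have "\<dots> = (\<integral>\<^sup>+s. 2 * indicator ?I s \<partial>lborel)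
      + (\<integral>\<^sup>+s. ennreal K * (indicator ?I s * ?f s) \<partial>lborel)"
    by (intro nn_integral_add; measurable)
  also have "\<dots> = 2 * emeasure lborel ?I + ennreal K * (\<integral>\<^sup>+s. indicator ?I s * ?f s \<partial>lborel)"
    by (simp add: nn_integral_cmult nn_integral_indicator[OF I_meas])
  also have "\<dots> \<le> 2 * ennreal (15 * N2 / 2) + ennreal K * ennreal (32 * sqrt (N2 / (N1 / 4) powr \<alpha>))"
    using assms
    by (intro add_mono mult_left_mono emeasure_xi_range_le nn_integral_xi_range_vertex_value_le)
      auto
  also have "\<dots> = ennreal (15 * N2 + K * (32 * sqrt (N2 / (N1 / 4) powr \<alpha>)))"
  proof -
    have "2 * ennreal (15 * N2 / 2) = ennreal (15 * N2)"
      using ennreal_mult[of 2 "15 * N2 / 2"] assms by simp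
    moreover have "ennreal K * ennreal (32 * sqrt (N2 / (N1 / 4) powr \<alpha>))
        = ennreal (K * (32 * sqrt (N2 / (N1 / 4) powr \<alpha>)))"
      using assms by (intro ennreal_mult[symmetric]) auto
    ultimately show ?thesis
      using assms by (simp only:) (intro ennreal_plus[symmetric]; simp)
  qed
  finally show ?thesis .
qed

lemma emeasure_M3_convolution_domain:
  assumes "E1 \<in> sets M3" "E2 \<in> sets M3"
  shows "emeasure M3 {y \<in> E1. (\<tau>, \<xi>, \<eta>) - y \<in> E2} = (\<integral>\<^sup>+\<xi>1. \<integral>\<^sup>+\<eta>1. \<integral>\<^sup>+\<tau>1.
    indicator E1 (\<tau>1, \<xi>1, \<eta>1) * indicator E2 (\<tau> - \<tau>1, \<xi> - \<xi>1, \<eta> - \<eta>1)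
    \<partial>lborel \<partial>count_space UNIV \<partial>lborel)"
proof -
  have [measurable]: "E1 \<in> sets M3" "E2 \<in> sets M3"
    using assms by auto
  have "{y \<in> E1. (\<tau>, \<xi>, \<eta>) - y \<in> E2} \<in> sets M3"
    by measurable
  then have "emeasure M3 {y \<in> E1. (\<tau>, \<xi>, \<eta>) - y \<in> E2}
      = (\<integral>\<^sup>+y. indicator {y \<in> E1. (\<tau>, \<xi>, \<eta>) - y \<in> E2} y \<partial>M3)"
    by (rule nn_integral_indicator[symmetric])
  also have "\<dots> = (\<integral>\<^sup>+y. indicator E1 y * indicator E2 ((\<tau>, \<xi>, \<eta>) - y) \<partial>M3)"
    by (intro nn_integral_cong) (simp add: indicator_def)
  also have "\<dots> = (\<integral>\<^sup>+\<xi>1. \<integral>\<^sup>+\<eta>1. \<integral>\<^sup>+\<tau>1. indicator E1 (\<tau>1, \<xi>1, \<eta>1)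
      * indicator E2 (\<tau> - \<tau>1, \<xi> - \<xi>1, \<eta> - \<eta>1) \<partial>lborel \<partial>count_space UNIV \<partial>lborel)"
    by (subst nn_integral_M3_iterated) simp_all
  finally show ?thesis .
qed

lemma emeasure_D_set_convolution_le:
  assumes "\<alpha> \<ge> 1" "N1 > 0" "N2 > 0" "32 * N2 \<le> N1" "L1 > 0" "L2 > 0"
  shows "emeasure M3 {y \<in> D_set \<alpha> N1 L1. x - y \<in> D_set \<alpha> N2 L2} \<le> ennreal (2 * min L1 L2
    * (15 * N2 + 4 * (L1 + L2) * sqrt (8 * N2) * (32 * sqrt (N2 / (N1 / 4) powr \<alpha>))))"
proof -
  obtain \<tau> \<xi> \<eta> where x: "x = (\<tau>, \<xi>, \<eta>)"
    by (cases x) auto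
  define K where "K = 4 * (L1 + L2) * sqrt (8 * N2)"
  let ?I = "{s \<in> A_set N1. \<xi> - s \<in> A_set N2}"
  let ?J = "\<lambda>\<xi>1. {n. \<bar>\<tau> - omega \<alpha> \<xi>1 n - omega \<alpha> (\<xi> - \<xi>1) (\<eta> - n)\<bar> \<le> L1 + L2}"
  have "emeasure M3 {y \<in> D_set \<alpha> N1 L1. x - y \<in> D_set \<alpha> N2 L2}
      = (\<integral>\<^sup>+\<xi>1. \<integral>\<^sup>+\<eta>1. \<integral>\<^sup>+\<tau>1. indicator (D_set \<alpha> N1 L1) (\<tau>1, \<xi>1, \<eta>1)
      * indicator (D_set \<alpha> N2 L2) (\<tau> - \<tau>1, \<xi> - \<xi>1, \<eta> - \<eta>1) \<partial>lborel \<partial>count_space UNIV \<partial>lborel)"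
    unfolding x by (rule emeasure_M3_convolution_domain) simp_all
  also have "\<dots> \<le> (\<integral>\<^sup>+\<xi>1. \<integral>\<^sup>+\<eta>1. ennreal (2 * min L1 L2) * indicator ?I \<xi>1 * indicator (?J \<xi>1) \<eta>1
      \<partial>count_space UNIV \<partial>lborel)"
    using assms by (intro nn_integral_mono nn_integral_tau_le) auto
  also have "\<dots> = (\<integral>\<^sup>+\<xi>1. ennreal (2 * min L1 L2) * indicator ?I \<xi>1
      * emeasure (count_space UNIV) (?J \<xi>1) \<partial>lborel)"
    by (simp add: nn_integral_cmult)
  also have "\<dots> \<le> (\<integral>\<^sup>+\<xi>1. ennreal (2 * min L1 L2) * (indicator ?I \<xi>1
      * (2 + ennreal K * inv_sqrt_abs (vertex_value \<alpha> \<tau> \<xi> \<eta> \<xi>1))) \<partial>lborel)"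
  proof (intro nn_integral_mono)
    fix \<xi>1
    show "ennreal (2 * min L1 L2) * indicator ?I \<xi>1 * emeasure (count_space UNIV) (?J \<xi>1)
        \<le> ennreal (2 * min L1 L2) * (indicator ?I \<xi>1
          * (2 + ennreal K * inv_sqrt_abs (vertex_value \<alpha> \<tau> \<xi> \<eta> \<xi>1)))"
    proof (cases "\<xi>1 \<in> ?I")
      case True
      then have "emeasure (count_space UNIV) (?J \<xi>1)
          \<le> 2 + ennreal K * inv_sqrt_abs (vertex_value \<alpha> \<tau> \<xi> \<eta> \<xi>1)"
        unfolding K_def using assms by (intro emeasure_eta_le) auto
      with True show ?thesis
        by (simp add: mult_left_mono)
    qed simp
  qed
  also have "\<dots> = ennreal (2 * min L1 L2) * (\<integral>\<^sup>+\<xi>1. indicator ?I \<xi>1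
      * (2 + ennreal K * inv_sqrt_abs (vertex_value \<alpha> \<tau> \<xi> \<eta> \<xi>1)) \<partial>lborel)"
    by (rule nn_integral_cmult) (simp add: xi_range_eq)
  also have "\<dots> \<le> ennreal (2 * min L1 L2)
      * ennreal (15 * N2 + K * (32 * sqrt (N2 / (N1 / 4) powr \<alpha>)))"
    using assms by (intro mult_left_mono nn_integral_xi_le) (auto simp: K_def)
  also have "\<dots> = ennreal (2 * min L1 L2 * (15 * N2 + K * (32 * sqrt (N2 / (N1 / 4) powr \<alpha>))))"
    using assms by (simp add: K_def ennreal_mult')
  finally show ?thesis
    by (simp add: K_def)
qed

lemma one_plus_le_two_jb: "1 + t \<le> 2 * jb t"
proof -
  have "(1 + t)\<^sup>2 \<le> 2\<^sup>2 * (1 + t\<^sup>2)"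
    using sum_squares_ge_zero[of "t - 1/3" 0] by (simp add: power2_eq_square algebra_simps)
  then have "1 + t \<le> sqrt (2\<^sup>2 * (1 + t\<^sup>2))"
    by (rule real_le_rsqrt)
  then show ?thesis
    unfolding jb_def real_sqrt_mult real_sqrt_abs by simp
qed

definition conv_const :: "real \<Rightarrow> real" where
  "conv_const \<alpha> = 4 * (15 + 768 * 2 powr \<alpha>)"

lemma conv_const_pos: "conv_const \<alpha> > 0"
  unfolding conv_const_def by (simp add: add_pos_nonneg)

lemma convolution_domain_bound_le:
  fixes N1 N2 L1 L2 \<alpha> :: real
  assumes "N1 > 0" "N2 > 0" "L1 > 0" "L2 > 0"
  shows "2 * min L1 L2
      * (15 * N2 + 4 * (L1 + L2) * sqrt (8 * N2) * (32 * sqrt (N2 / (N1 / 4) powr \<alpha>)))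
    \<le> conv_const \<alpha> * (N2 * min L1 L2 * jb (max L1 L2 / N1 powr (\<alpha> / 2)))"
proof -
  define P where "P = N1 powr (\<alpha> / 2)"
  define t where "t = max L1 L2 / P"
  have "P > 0" "t \<ge> 0"
    using assms by (auto simp: P_def t_def)
  have "sqrt ((N1 / 4) powr \<alpha>) = (N1 / 4) powr (\<alpha> / 2)"
    using assms by (simp add: powr_half_sqrt[symmetric] powr_powr)
  also have "\<dots> = P / 2 powr \<alpha>"
    using assms by (simp add: P_def powr_divide powr_powr flip: powr_numeral)
  finally have prod_eq: "sqrt (8 * N2) * sqrt (N2 / (N1 / 4) powr \<alpha>) = sqrt 8 * (N2 * 2 powr \<alpha> / P)"
    using assms \<open>P > 0\<close> by (simp add: real_sqrt_mult real_sqrt_divide field_simps)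
  have "sqrt 8 \<le> (3 :: real)"
    by (rule real_le_lsqrt) auto
  have "4 * (L1 + L2) * sqrt (8 * N2) * (32 * sqrt (N2 / (N1 / 4) powr \<alpha>))
      = 128 * (L1 + L2) * (sqrt (8 * N2) * sqrt (N2 / (N1 / 4) powr \<alpha>))"
    by (simp add: mult_ac)
  also have "\<dots> = 128 * ((L1 + L2) * sqrt 8) * (N2 * 2 powr \<alpha> / P)"
    unfolding prod_eq by (simp add: mult_ac)
  also have "\<dots> \<le> 128 * (2 * max L1 L2 * 3) * (N2 * 2 powr \<alpha> / P)"
    using assms \<open>P > 0\<close> \<open>sqrt 8 \<le> 3\<close>
    by (intro mult_right_mono mult_left_mono mult_mono) auto
  also have "\<dots> = 768 * 2 powr \<alpha> * N2 * t"
    using \<open>P > 0\<close> by (simp add: t_def field_simps)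
  finally have "2 * min L1 L2
      * (15 * N2 + 4 * (L1 + L2) * sqrt (8 * N2) * (32 * sqrt (N2 / (N1 / 4) powr \<alpha>)))
      \<le> 2 * min L1 L2 * (15 * N2 + 768 * 2 powr \<alpha> * N2 * t)"
    using assms by (intro mult_left_mono add_left_mono) auto
  also have "\<dots> = 2 * min L1 L2 * N2 * (15 + 768 * 2 powr \<alpha> * t)"
    by (simp add: algebra_simps)
  also have "\<dots> \<le> 2 * min L1 L2 * N2 * ((15 + 768 * 2 powr \<alpha>) * (1 + t))"
    using assms \<open>t \<ge> 0\<close> by (intro mult_left_mono) (auto simp: algebra_simps)
  also have "\<dots> \<le> 2 * min L1 L2 * N2 * ((15 + 768 * 2 powr \<alpha>) * (2 * jb t))"
    using assms by (intro mult_left_mono one_plus_le_two_jb) auto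
  also have "\<dots> = conv_const \<alpha> * (N2 * min L1 L2 * jb t)"
    by (simp add: conv_const_def algebra_simps)
  finally show ?thesis
    unfolding t_def P_def .
qed

lemma L2norm_conv3_D_set_le:
  assumes "\<alpha> \<ge> 1" "N1 > 0" "N2 > 0" "32 * N2 \<le> N1" "L1 > 0" "L2 > 0"
    and "in_L2 f1" "in_L2 f2" "supp3 f1 \<subseteq> D_set \<alpha> N1 L1" "supp3 f2 \<subseteq> D_set \<alpha> N2 L2"
  shows "in_L2 (conv3 f1 f2) \<and> L2norm (conv3 f1 f2) \<le> sqrt (conv_const \<alpha>)
    * sqrt N2 * sqrt (min L1 L2) * sqrt (jb (max L1 L2 / N1 powr (\<alpha> / 2))) * L2norm f1 * L2norm f2"
proof -
  define B where "B = conv_const \<alpha> * (N2 * min L1 L2 * jb (max L1 L2 / N1 powr (\<alpha> / 2)))"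
  have "B \<ge> 0"
    using assms conv_const_pos[of \<alpha>] by (simp add: B_def jb_def)
  have "emeasure M3 {y \<in> D_set \<alpha> N1 L1. x - y \<in> D_set \<alpha> N2 L2} \<le> ennreal B" for x
    using emeasure_D_set_convolution_le[OF assms(1-6)]
      convolution_domain_bound_le[OF assms(2,3,5,6)]
    unfolding B_def by (meson ennreal_leI order_trans)
  from L2norm_conv3_le[OF assms(7-10) sets_D_set sets_D_set \<open>B \<ge> 0\<close> this]
  show ?thesis
    using assms by (simp add: B_def real_sqrt_mult mult_ac)
qed

lemma L2norm_conv3_dyadic_le:
  assumes "\<alpha> \<ge> 1" "dyadic_Z N1" "dyadic_Z N2" "N2 \<le> 1 / 32 * N1" "dyadic_N0 L1" "dyadic_N0 L2"
    "dyadic_N Dst" "in_L2 f1" "in_L2 f2" "supp3 f1 \<subseteq> D_set \<alpha> N1 L1" "supp3 f2 \<subseteq> D_set \<alpha> N2 L2"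
  shows "in_L2 (conv3 f1 f2) \<and> L2norm (conv3 f1 f2) \<le> sqrt (conv_const \<alpha>) / ln 2
    * ln Dst * sqrt N2 * sqrt (min L1 L2) * sqrt (jb (max L1 L2 / N1 powr (\<alpha> / 2)))
    * L2norm f1 * L2norm f2"
proof -
  have "N1 > 0" "N2 > 0" "L1 > 0" "L2 > 0"
    using assms(2,3,5,6) by (auto simp: dyadic_Z_def dyadic_N0_def)
  have "ln 2 \<le> ln Dst"
    using assms(7) power_increasing[of 1 _ "2::real"] by (auto simp: dyadic_N_def)
  then have "1 \<le> ln Dst / ln 2"
    by simp
  define R where "R = sqrt (conv_const \<alpha>) * sqrt N2 * sqrt (min L1 L2)
    * sqrt (jb (max L1 L2 / N1 powr (\<alpha> / 2))) * L2norm f1 * L2norm f2"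
  have "R \<ge> 0"
    using conv_const_pos[of \<alpha>] \<open>N2 > 0\<close> \<open>L1 > 0\<close> \<open>L2 > 0\<close> by (simp add: R_def L2norm_nonneg jb_def)
  have "in_L2 (conv3 f1 f2) \<and> L2norm (conv3 f1 f2) \<le> R"
    unfolding R_def using assms(4)
    by (intro L2norm_conv3_D_set_le[OF assms(1) \<open>N1 > 0\<close> \<open>N2 > 0\<close> _ \<open>L1 > 0\<close> \<open>L2 > 0\<close> assms(8-11)])
      simp
  moreover have "R \<le> ln Dst / ln 2 * R"
    using mult_right_mono[OF \<open>1 \<le> ln Dst / ln 2\<close> \<open>R \<ge> 0\<close>] by simp
  ultimately show ?thesis
    by (simp add: R_def mult_ac)
qed

theorem lemma4p5:
  fixes \<alpha> :: real
  assumes "\<alpha> \<ge> 2"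
  shows "\<forall>K>0. \<forall>c1>0. \<exists>c0>0. \<exists>C>0.
    \<forall>N1 N2 L1 L2 Dst :: real. \<forall>f1 f2 :: pt \<Rightarrow> complex.
      dyadic_Z N1 \<longrightarrow> dyadic_Z N2 \<longrightarrow> N2 \<le> c0 * N1 \<longrightarrow> N1 \<ge> c1 \<longrightarrow>
      dyadic_N0 L1 \<longrightarrow> dyadic_N0 L2 \<longrightarrow> dyadic_N Dst \<longrightarrow>
      in_L2 f1 \<longrightarrow> in_L2 f2 \<longrightarrow>
      supp3 f1 \<subseteq> D_set \<alpha> N1 L1 \<longrightarrow> supp3 f2 \<subseteq> D_set \<alpha> N2 L2 \<longrightarrow>
      (\<forall>\<tau>1 \<xi>1 \<eta>1 \<tau>2 \<xi>2 \<eta>2. (\<tau>1, \<xi>1, \<eta>1) \<in> supp3 f1 \<longrightarrow> (\<tau>2, \<xi>2, \<eta>2) \<in> supp3 f2 \<longrightarrow>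
         \<bar>real_of_int \<eta>1 / \<xi>1 - real_of_int \<eta>2 / \<xi>2\<bar> \<le> K * Dst) \<longrightarrow>
      in_L2 (conv3 f1 f2) \<and>
      L2norm (conv3 f1 f2) \<le> C * ln Dst * sqrt N2 * sqrt (min L1 L2)
         * sqrt (jb (max L1 L2 / N1 powr (\<alpha> / 2))) * L2norm f1 * L2norm f2"
proof (intro allI impI exI[of _ "1 / 32"] conjI[OF _ exI[of _ "sqrt (conv_const \<alpha>) / ln 2"]] conjI)
qed (use assms L2norm_conv3_dyadic_le[of \<alpha>] conv_const_pos[of \<alpha>] in auto)

end
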